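(* Let $V$ be a finite nonempty set, $c\in\mathbb{R}^{P_V}$, $\hat x$ a maximally specific partial function on $P_V$, $U\subseteq V$, and $ij\in (U\times(V\setminus U))\setminus\operatorname{dom}(\hat x)$. If $(U\times(V\setminus U))\cap\hat x^{-1}(1)=\emptyset$ and $$c_{ij}^-\ \ge \sum_{pq\in (U\times(V\setminus U))\setminus\hat x^{-1}(0)} c_{pq}^+,$$ then there is a maximizer $x^*$ of $\varphi_c$ over $X_V[\hat x]$ with $x^*_{ij}=0$.
   Context: $P_V=\{pq\in V^2\mid p\neq q\}$; $X_V$ is the set of $x\in\{0,1\}^{P_V}$ with $x_{pq}+x_{qr}-x_{pr}\le 1$ for all pairwise distinct $p,q,r\in V$; $\varphi_c(x)=\sum_{pq\in P_V}c_{pq}x_{pq}$. A partial function $\tilde x$ is a map from $\operatorname{dom}(\tilde x)\subseteq P_V$ to $\{0,1\}$, $\tilde x^{-1}(b)$ the pairs mapped to $b$, and $X_V[\tilde x]=\{x\in X_V\mid x_{pq}=\tilde x_{pq}\ \forall pq\in\operatorname{dom}(\tilde x)\}$. A pair $pq$ is decided if $x_{pq}=x'_{pq}$ for all $x,x'\in X_V[\tilde x]$; $\tilde x$ is maximally specific if $X_V[\tilde x]\ne\emptyset$ and the decided pairs are exactly $\operatorname{dom}(\tilde x)$. For real $a$: $a^+=\max(a,0)$, $a^-=\max(-a,0)$. *)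

theory Defs
  imports Main "HOL-Library.Extended_Real" Complex_Main
begin

definition PV :: "'a set \<Rightarrow> ('a \<times> 'a) set" where
  "PV V = {(p, q). p \<in> V \<and> q \<in> V \<and> p \<noteq> q}"

text \<open>Feasible 0/1 vectors in {0,1}^{P_V}; represented as functions that are 0 outside P_V.\<close>
definition XV :: "'a set \<Rightarrow> (('a \<times> 'a) \<Rightarrow> int) set" where
  "XV V = {x. (\<forall>pq \<in> PV V. x pq \<in> {0, 1}) \<and> (\<forall>pq. pq \<notin> PV V \<longrightarrow> x pq = 0) \<and>
     (\<forall>p\<in>V. \<forall>q\<in>V. \<forall>r\<in>V. p \<noteq> q \<and> q \<noteq> r \<and> p \<noteq> r \<longrightarrow>
        x (p, q) + x (q, r) - x (p, r) \<le> 1)}"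

definition phi :: "(('a \<times> 'a) \<Rightarrow> real) \<Rightarrow> 'a set \<Rightarrow> (('a \<times> 'a) \<Rightarrow> int) \<Rightarrow> real" where
  "phi c V x = (\<Sum>pq \<in> PV V. c pq * real_of_int (x pq))"

definition is_partial :: "'a set \<Rightarrow> (('a \<times> 'a) \<rightharpoonup> int) \<Rightarrow> bool" where
  "is_partial V xt \<longleftrightarrow> dom xt \<subseteq> PV V \<and> ran xt \<subseteq> {0, 1}"

definition preim :: "(('a \<times> 'a) \<rightharpoonup> int) \<Rightarrow> int \<Rightarrow> ('a \<times> 'a) set" where
  "preim xt b = {pq. xt pq = Some b}"

definition XV_restr :: "'a set \<Rightarrow> (('a \<times> 'a) \<rightharpoonup> int) \<Rightarrow> (('a \<times> 'a) \<Rightarrow> int) set" where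
  "XV_restr V xt = {x \<in> XV V. \<forall>pq \<in> dom xt. Some (x pq) = xt pq}"

definition decided :: "'a set \<Rightarrow> (('a \<times> 'a) \<rightharpoonup> int) \<Rightarrow> ('a \<times> 'a) \<Rightarrow> bool" where
  "decided V xt pq \<longleftrightarrow> (\<forall>x \<in> XV_restr V xt. \<forall>x' \<in> XV_restr V xt. x pq = x' pq)"

definition maximally_specific :: "'a set \<Rightarrow> (('a \<times> 'a) \<rightharpoonup> int) \<Rightarrow> bool" where
  "maximally_specific V xt \<longleftrightarrow> XV_restr V xt \<noteq> {} \<and>
     {pq \<in> PV V. decided V xt pq} = dom xt"

definition pospart :: "real \<Rightarrow> real" where "pospart a = max a 0"
definition negpart :: "real \<Rightarrow> real" where "negpart a = max (- a) 0"

end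

theory Submission
  imports Defs
begin

text \<open>
  Take a maximizer \<open>x\<close> of \<open>\<phi>\<^sub>c\<close> over \<open>X\<^sub>V[xh]\<close>; if \<open>x\<^sub>i\<^sub>j = 1\<close>, set \<open>x\<close> to \<open>0\<close> on the cut
  \<open>\<delta>(U) = U \<times> (V - U)\<close>. Whenever \<open>pr \<in> \<delta>(U)\<close>, also \<open>pq \<in> \<delta>(U)\<close> or \<open>qr \<in> \<delta>(U)\<close>, so the
  transitivity inequalities survive; \<open>xh\<close> has no \<open>1\<close> on \<open>\<delta>(U)\<close>, so the fixed values
  survive; and the objective grows by \<open>-\<Sigma> c\<^sub>p\<^sub>q x\<^sub>p\<^sub>q\<close>, summed over the pairs of \<open>\<delta>(U)\<close>
  not fixed to \<open>0\<close>, which is at least \<open>c\<^sub>i\<^sub>j\<^sup>- - \<Sigma> c\<^sub>p\<^sub>q\<^sup>+ \<ge> 0\<close>.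
  Maximal specificity is only used for \<open>X\<^sub>V[xh] \<noteq> {}\<close>.
\<close>

lemma XV_binary: "x \<in> XV V \<Longrightarrow> pq \<in> PV V \<Longrightarrow> x pq \<in> {0, 1}"
  unfolding XV_def by blast

lemma XV_zero_outside: "x \<in> XV V \<Longrightarrow> pq \<notin> PV V \<Longrightarrow> x pq = 0"
  unfolding XV_def by blast

lemma finite_PV: "finite V \<Longrightarrow> finite (PV V)"
  by (rule finite_subset[of _ "V \<times> V"]) (auto simp: PV_def)

lemma finite_XV:
  assumes "finite V"
  shows "finite (XV V)"
proof (rule finite_subset)
  show "XV V \<subseteq> (\<lambda>S pq. if pq \<in> S then 1 else 0) ` Pow (PV V)"
  proof
    fix x assume x: "x \<in> XV V"
    have "x = (\<lambda>pq. if pq \<in> {pq \<in> PV V. x pq = 1} then 1 else 0)"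
      using XV_binary[OF x] XV_zero_outside[OF x] by fastforce
    then show "x \<in> (\<lambda>S pq. if pq \<in> S then 1 else 0) ` Pow (PV V)"
      by blast
  qed
  show "finite ((\<lambda>S pq. if pq \<in> S then 1 else 0 :: int) ` Pow (PV V))"
    using finite_PV[OF assms] by simp
qed

definition cut_to_zero :: "'a set \<Rightarrow> 'a set \<Rightarrow> ('a \<times> 'a \<Rightarrow> int) \<Rightarrow> 'a \<times> 'a \<Rightarrow> int" where
  "cut_to_zero V U x = (\<lambda>pq. if pq \<in> U \<times> (V - U) then 0 else x pq)"

lemma cut_to_zero_in_XV:
  assumes x: "x \<in> XV V"
  shows "cut_to_zero V U x \<in> XV V"
  unfolding XV_def
proof (intro CollectI conjI ballI allI impI)
  fix pq assume "pq \<in> PV V"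
  then show "cut_to_zero V U x pq \<in> {0, 1}"
    using XV_binary[OF x] by (simp add: cut_to_zero_def)
next
  fix pq assume "pq \<notin> PV V"
  then show "cut_to_zero V U x pq = 0"
    using XV_zero_outside[OF x] by (simp add: cut_to_zero_def)
next
  fix p q r assume pqr: "p \<in> V" "q \<in> V" "r \<in> V" "p \<noteq> q \<and> q \<noteq> r \<and> p \<noteq> r"
  let ?x' = "cut_to_zero V U x"
  have bounds: "0 \<le> ?x' pq \<and> ?x' pq \<le> x pq \<and> x pq \<le> 1" if "pq \<in> PV V" for pq
    using XV_binary[OF x that] by (auto simp: cut_to_zero_def)
  have pq: "(p, q) \<in> PV V" and qr: "(q, r) \<in> PV V"
    using pqr by (auto simp: PV_def)
  show "?x' (p, q) + ?x' (q, r) - ?x' (p, r) \<le> 1"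
  proof (cases "(p, r) \<in> U \<times> (V - U)")
    case True
    then have "?x' (p, q) = 0 \<or> ?x' (q, r) = 0"
      using pqr by (auto simp: cut_to_zero_def)
    moreover have "?x' (p, r) = 0"
      using True by (simp add: cut_to_zero_def)
    ultimately show ?thesis
      using bounds[OF pq] bounds[OF qr] by auto
  next
    case False
    then have "?x' (p, r) = x (p, r)"
      unfolding cut_to_zero_def by (rule if_not_P)
    moreover have "x (p, q) + x (q, r) - x (p, r) \<le> 1"
      using x pqr unfolding XV_def by blast
    ultimately show ?thesis
      using bounds[OF pq] bounds[OF qr] by linarith
  qed
qed

lemma cut_to_zero_in_XV_restr:
  assumes x: "x \<in> XV_restr V xh" and "is_partial V xh"
    and no_one: "(U \<times> (V - U)) \<inter> preim xh 1 = {}"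
  shows "cut_to_zero V U x \<in> XV_restr V xh"
proof -
  have "Some (cut_to_zero V U x pq) = xh pq" if "pq \<in> dom xh" for pq
  proof (cases "pq \<in> U \<times> (V - U)")
    case True
    obtain b where b: "xh pq = Some b"
      using \<open>pq \<in> dom xh\<close> by blast
    with \<open>is_partial V xh\<close> have "b \<in> {0, 1}"
      unfolding is_partial_def by (meson ranI subsetD)
    moreover have "b \<noteq> 1"
      using no_one True b by (auto simp: preim_def)
    ultimately show ?thesis
      using True b by (simp add: cut_to_zero_def)
  next
    case False
    then show ?thesis
      using x that by (simp add: cut_to_zero_def XV_restr_def)
  qed
  then show ?thesis
    using x cut_to_zero_in_XV by (auto simp: XV_restr_def)
qed

lemma phi_cut_to_zero:
  assumes "finite V" and "U \<subseteq> V"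
  shows "phi c V (cut_to_zero V U x)
    = phi c V x - (\<Sum>pq \<in> U \<times> (V - U). c pq * real_of_int (x pq))"
proof -
  let ?f = "\<lambda>y pq. c pq * real_of_int (y pq)"
  have cut: "U \<times> (V - U) \<subseteq> PV V"
    using \<open>U \<subseteq> V\<close> by (auto simp: PV_def)
  have split: "phi c V y = sum (?f y) (U \<times> (V - U)) + sum (?f y) (PV V - U \<times> (V - U))" for y
    unfolding phi_def using sum.subset_diff[OF cut finite_PV[OF \<open>finite V\<close>]]
    by (simp add: add.commute)
  have "sum (?f (cut_to_zero V U x)) (PV V - U \<times> (V - U)) = sum (?f x) (PV V - U \<times> (V - U))"
    by (rule sum.cong) (auto simp: cut_to_zero_def)
  moreover have "sum (?f (cut_to_zero V U x)) (U \<times> (V - U)) = 0"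
    by (simp add: cut_to_zero_def)
  ultimately show ?thesis
    using split[of x] split[of "cut_to_zero V U x"] by simp
qed

lemma sum_times_binary_nonpos:
  fixes c :: "'b \<Rightarrow> real" and x :: "'b \<Rightarrow> int"
  assumes "finite D" and "e \<in> D" and "x e = 1" and "\<forall>d \<in> D. x d \<in> {0, 1}"
    and "negpart (c e) \<ge> (\<Sum>d \<in> D. pospart (c d))"
  shows "(\<Sum>d \<in> D. c d * real_of_int (x d)) \<le> 0"
proof -
  have "(\<Sum>d \<in> D. c d * real_of_int (x d))
      \<le> (\<Sum>d \<in> D. pospart (c d) - (if d = e then negpart (c e) else 0))"
    using assms(3,4) by (intro sum_mono) (auto simp: pospart_def negpart_def)
  also have "\<dots> = (\<Sum>d \<in> D. pospart (c d)) - negpart (c e)"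
    using assms(1,2) by (simp add: sum_subtractf)
  finally show ?thesis
    using assms(5) by simp
qed

lemma cut_weight_nonpos:
  assumes "finite V" and "U \<subseteq> V" and x: "x \<in> XV_restr V xh"
    and ij: "(i, j) \<in> U \<times> (V - U)" and "x (i, j) = 1"
    and "negpart (c (i, j)) \<ge> (\<Sum>pq \<in> (U \<times> (V - U)) - preim xh 0. pospart (c pq))"
  shows "(\<Sum>pq \<in> U \<times> (V - U). c pq * real_of_int (x pq)) \<le> 0"
proof -
  let ?C = "U \<times> (V - U)"
  let ?D = "?C - preim xh 0"
  have fin: "finite ?C"
    using \<open>finite V\<close> \<open>U \<subseteq> V\<close> by (simp add: finite_subset)
  have zero: "x pq = 0" if "pq \<in> preim xh 0" for pq
  proof -
    have "xh pq = Some 0"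
      using that by (simp add: preim_def)
    moreover have "Some (x pq) = xh pq"
      using x \<open>xh pq = Some 0\<close> unfolding XV_restr_def by blast
    ultimately show ?thesis
      by simp
  qed
  then have "(\<Sum>pq \<in> ?C. c pq * real_of_int (x pq)) = (\<Sum>pq \<in> ?D. c pq * real_of_int (x pq))"
    by (intro sum.mono_neutral_right[OF fin]) auto
  also have "\<dots> \<le> 0"
  proof (rule sum_times_binary_nonpos)
    show "finite ?D"
      using fin by simp
    show "(i, j) \<in> ?D"
      using ij \<open>x (i, j) = 1\<close> zero by fastforce
    have "?C \<subseteq> PV V"
      using \<open>U \<subseteq> V\<close> by (auto simp: PV_def)
    moreover have "x \<in> XV V"
      using x by (simp add: XV_restr_def)
    ultimately show "\<forall>pq \<in> ?D. x pq \<in> {0, 1}"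
      using XV_binary by blast
  qed fact+
  finally show ?thesis .
qed

theorem proposition6p2:
  fixes V U :: "'a set" and c :: "('a \<times> 'a) \<Rightarrow> real"
    and xh :: "('a \<times> 'a) \<rightharpoonup> int" and i j :: 'a
  assumes "finite V" and "V \<noteq> {}"
    and "is_partial V xh" and "maximally_specific V xh"
    and "U \<subseteq> V"
    and "(i, j) \<in> (U \<times> (V - U)) - dom xh"
    and "(U \<times> (V - U)) \<inter> preim xh 1 = {}"
    and "negpart (c (i, j)) \<ge> (\<Sum>pq \<in> (U \<times> (V - U)) - preim xh 0. pospart (c pq))"
  shows "\<exists>xs \<in> XV_restr V xh. (\<forall>x \<in> XV_restr V xh. phi c V x \<le> phi c V xs) \<and> xs (i, j) = 0"
proof -
  let ?S = "XV_restr V xh"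
  have fin: "finite (phi c V ` ?S)"
    using finite_XV[OF \<open>finite V\<close>] by (simp add: XV_restr_def)
  have "?S \<noteq> {}"
    using \<open>maximally_specific V xh\<close> by (simp add: maximally_specific_def)
  then have "Max (phi c V ` ?S) \<in> phi c V ` ?S"
    using Max_in[OF fin] by blast
  then obtain x where x: "x \<in> ?S" and "phi c V x = Max (phi c V ` ?S)"
    by (metis imageE)
  then have x_max: "\<forall>y \<in> ?S. phi c V y \<le> phi c V x"
    using Max_ge[OF fin] by simp
  have ij: "(i, j) \<in> U \<times> (V - U)"
    using assms(6) by blast
  then have "(i, j) \<in> PV V"
    using \<open>U \<subseteq> V\<close> by (auto simp: PV_def)
  then have "x (i, j) \<in> {0, 1}"
    using x XV_binary unfolding XV_restr_def by blast
  then consider "x (i, j) = 0" | "x (i, j) = 1"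
    by blast
  then show ?thesis
  proof cases
    case 1
    then show ?thesis using x x_max by blast
  next
    case 2
    let ?x' = "cut_to_zero V U x"
    have "phi c V x \<le> phi c V ?x'"
      using phi_cut_to_zero[OF \<open>finite V\<close> \<open>U \<subseteq> V\<close>, of c x]
        cut_weight_nonpos[OF \<open>finite V\<close> \<open>U \<subseteq> V\<close> x ij 2 assms(8)] by linarith
    moreover have "?x' \<in> ?S"
      using cut_to_zero_in_XV_restr[OF x assms(3,7)] .
    moreover have "?x' (i, j) = 0"
      using ij by (simp add: cut_to_zero_def)
    ultimately show ?thesis
      using x_max order.trans by blast
  qed
qed

end
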